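(* For any suitable parameters $(m,q,d,\tau)$, the shifted projection protocol $\Pi$ is informative: for every terminal execution $(H,\rho)$ of $\Pi$ and every agent $P$, there is no execution $(H',\rho)$ of $\Pi$ with $H'\ne H$ and $H'_P=H_P$.
   Context: Agents $\mathcal A=\{A,B_1,\dots,B_m\}$ speak in the order $A,B_1,\dots,B_m$. A distribution type is a vector $\tau=(\tau_P)_{P\in\mathcal A}$ of positive integers, $|\tau|=\sum_P\tau_P$; the deck $\Omega$ has $|\tau|$ cards; a deal of type $\tau$ is a partition $H=(H_P)_P$ of $\Omega$ with $|H_P|=\tau_P$. Suitable parameters: $m>1$, $q>m$ a prime power, $d>0$, $|\tau|=q^{d+1}$, $\tau_A=q^{d+1}-q^d$, $\tau_{B_k}>q^{d-1}$ for each $k\in[1,m]$. A transversal hyperplane $V\subseteq\mathbb F_q^{d+1}$ is $\{x: x_{d+1}=a_1x_1+\dots+a_dx_d+b\}$; $\sigma(V)=(a_1,\dots,a_d)$; $\pi$ projects $\mathbb F_q^{d+1}$ onto the first $d$ coordinates; $\pi^V_\downarrow(w)=\pi(w)+\sigma(V)$ for $w\in V$. Shifted projection protocol (tokens: maps $\Omega\to\mathbb F_q^{d+1}$ and subsets of $\mathbb F_q^d$; runs are finite token sequences, $\rho*a$ appends $a$): the maximal executions for deal $H$ are $(H,f,X_1,\dots,X_m)$ with $f:\Omega\to\mathbb F_q^{d+1}$ a bijection such that $V=\mathbb F_q^{d+1}\setminus f[H_A]$ is a transversal hyperplane and $X_k=\pi^V_\downarrow[f[H_{B_k}]]$ for each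 $k$. $\Pi(H,\rho)$ is the set of tokens $a$ such that $(H,\rho*a)$ is an initial segment of a maximal execution. An execution is $(H,a_0,\dots,a_n)$ with $a_k\in\Pi(H,a_0,\dots,a_{k-1})$ for all $k$; it is terminal if $\Pi(H,\rho)=\emptyset$. *)

theory Defs
  imports Main
begin

text \<open>Agents are natural numbers: 0 is A, k (1 \<le> k \<le> m) is B_k.
  The deck \<Omega> is the universe of a finite type 'c.
  Vectors of F_q^n are lists of length n over a finite field 'f;
  coordinate x_i is x ! (i-1).\<close>

definition vecs :: "nat \<Rightarrow> 'f list set" where
  "vecs n = {x. length x = n}"

definition tau_total :: "nat \<Rightarrow> (nat \<Rightarrow> nat) \<Rightarrow> nat" where
  "tau_total m \<tau> = (\<Sum>P\<le>m. \<tau> P)"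

definition is_deal :: "nat \<Rightarrow> (nat \<Rightarrow> nat) \<Rightarrow> (nat \<Rightarrow> 'c set) \<Rightarrow> bool" where
  "is_deal m \<tau> H \<longleftrightarrow>
     (\<forall>P\<le>m. card (H P) = \<tau> P) \<and>
     (\<Union>P\<le>m. H P) = UNIV \<and>
     (\<forall>P\<le>m. \<forall>Q\<le>m. P \<noteq> Q \<longrightarrow> H P \<inter> H Q = {}) \<and>
     (\<forall>P. m < P \<longrightarrow> H P = {})"

definition hyperplane :: "nat \<Rightarrow> 'f::field list \<Rightarrow> 'f \<Rightarrow> 'f list set" where
  "hyperplane d a b = {x \<in> vecs (Suc d). x ! d = (\<Sum>i<d. a ! i * x ! i) + b}"

definition transversal :: "nat \<Rightarrow> 'f::field list set \<Rightarrow> bool" where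
  "transversal d V \<longleftrightarrow> (\<exists>a b. length a = d \<and> V = hyperplane d a b)"

definition sigma :: "nat \<Rightarrow> 'f::field list set \<Rightarrow> 'f list" where
  "sigma d V = (THE a. length a = d \<and> (\<exists>b. V = hyperplane d a b))"

definition proj :: "nat \<Rightarrow> 'f list \<Rightarrow> 'f list" where
  "proj d w = take d w"

definition shift_proj :: "nat \<Rightarrow> 'f::field list set \<Rightarrow> 'f list \<Rightarrow> 'f list" where
  "shift_proj d V w = map2 (+) (proj d w) (sigma d V)"

datatype ('c, 'f) token = MapTok "'c \<Rightarrow> 'f list" | SetTok "'f list set"

definition max_exec :: "nat \<Rightarrow> nat \<Rightarrow> (nat \<Rightarrow> nat) \<Rightarrow> (nat \<Rightarrow> 'c set)
    \<Rightarrow> ('c, 'f::field) token list \<Rightarrow> bool" where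
  "max_exec m d \<tau> H \<rho> \<longleftrightarrow> is_deal m \<tau> H \<and>
     (\<exists>f X. bij_betw f UNIV (vecs (Suc d)) \<and>
        transversal d (vecs (Suc d) - f ` H 0) \<and>
        (\<forall>k\<in>{1..m}. X k = shift_proj d (vecs (Suc d) - f ` H 0) ` f ` H k) \<and>
        \<rho> = MapTok f # map (\<lambda>k. SetTok (X k)) [1..<Suc m])"

definition Pi :: "nat \<Rightarrow> nat \<Rightarrow> (nat \<Rightarrow> nat) \<Rightarrow> (nat \<Rightarrow> 'c set)
    \<Rightarrow> ('c, 'f::field) token list \<Rightarrow> ('c, 'f) token set" where
  "Pi m d \<tau> H \<rho> = {a. \<exists>\<rho>'. max_exec m d \<tau> H (\<rho> @ [a] @ \<rho>')}"

definition execution :: "nat \<Rightarrow> nat \<Rightarrow> (nat \<Rightarrow> nat) \<Rightarrow> (nat \<Rightarrow> 'c set)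
    \<Rightarrow> ('c, 'f::field) token list \<Rightarrow> bool" where
  "execution m d \<tau> H \<rho> \<longleftrightarrow> is_deal m \<tau> H \<and>
     (\<forall>k<length \<rho>. \<rho> ! k \<in> Pi m d \<tau> H (take k \<rho>))"

definition terminal :: "nat \<Rightarrow> nat \<Rightarrow> (nat \<Rightarrow> nat) \<Rightarrow> (nat \<Rightarrow> 'c set)
    \<Rightarrow> ('c, 'f::field) token list \<Rightarrow> bool" where
  "terminal m d \<tau> H \<rho> \<longleftrightarrow> execution m d \<tau> H \<rho> \<and> Pi m d \<tau> H \<rho> = {}"

definition suitable :: "nat \<Rightarrow> nat \<Rightarrow> nat \<Rightarrow> (nat \<Rightarrow> nat) \<Rightarrow> bool" where
  "suitable m q d \<tau> \<longleftrightarrow> 1 < m \<and> m < q \<and> 0 < d \<and>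
     (\<forall>P\<le>m. 0 < \<tau> P) \<and>
     tau_total m \<tau> = q ^ (d + 1) \<and>
     \<tau> 0 = q ^ (d + 1) - q ^ d \<and>
     (\<forall>k\<in>{1..m}. q ^ (d - 1) < \<tau> k)"

end

theory Submission
  imports Defs
begin

text \<open>A maximal run publishes the bijection f and, for each B_k, the shifted projection X_k
  of f[H_B_k]. The hand of any one agent already determines the hyperplane
  V = F_q^(d+1) - f[H_A]: trivially for A, and for B_k because f[H_B_k] lies in V and has more
  than q^(d-1) points, while two distinct transversal hyperplanes meet in at most q^(d-1)
  points. Knowing V gives H_A back through f, and each H_B_k through X_k, since the shifted
  projection is injective on V. Finally, a terminal run is maximal (it is nonempty because every
  deal admits a maximal execution), and then so is every execution with the same run.\<close>

lemma finite_vecs: "finite (vecs n :: 'f::finite list set)"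
  unfolding vecs_def using finite_lists_length_eq[of "UNIV::'f set" n] by simp

lemma card_vecs: "card (vecs n :: 'f::finite list set) = card (UNIV :: 'f set) ^ n"
  unfolding vecs_def using card_lists_length_eq[of "UNIV::'f set" n] by simp

lemma hyperplane_subset_vecs: "hyperplane d a b \<subseteq> vecs (Suc d)"
  unfolding hyperplane_def by auto

lemma finite_hyperplane: "finite (hyperplane d a b :: 'f::{field,finite} list set)"
  using finite_subset[OF hyperplane_subset_vecs finite_vecs] .

lemma length_hyperplane: "x \<in> hyperplane d a b \<Longrightarrow> length x = Suc d"
  unfolding hyperplane_def vecs_def by simp

lemma hyperplane_last_diff:
  assumes "x \<in> hyperplane d a b" "y \<in> hyperplane d a b"
  shows "x ! d - y ! d = (\<Sum>i<d. a ! i * (x ! i - y ! i))"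
  using assms by (simp add: hyperplane_def right_diff_distrib sum_subtractf)

lemma nth_equality_Suc:
  assumes "length x = Suc d" "length y = Suc d" "\<And>i. i < d \<Longrightarrow> x ! i = y ! i" "x ! d = y ! d"
  shows "x = y"
proof (rule nth_equalityI)
  show "length x = length y" using assms(1,2) by simp
  fix i assume "i < length x"
  then have "i < d \<or> i = d" using assms(1) by linarith
  then show "x ! i = y ! i" using assms(3,4) by blast
qed

lemma hyperplane_eqI:
  assumes x: "x \<in> hyperplane d a b" and y: "y \<in> hyperplane d a b"
    and eq: "\<And>i. i < d \<Longrightarrow> x ! i = y ! i"
  shows "x = y"
proof (rule nth_equality_Suc[OF length_hyperplane[OF x] length_hyperplane[OF y] eq])
  have "(\<Sum>i<d. a ! i * (x ! i - y ! i)) = 0"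
    by (intro sum.neutral) (simp add: eq)
  then show "x ! d = y ! d"
    using hyperplane_last_diff[OF x y] by simp
qed

lemma inj_on_take_hyperplane: "inj_on (take d) (hyperplane d a b)"
proof (rule inj_onI)
  fix x y assume x: "x \<in> hyperplane d a b" and y: "y \<in> hyperplane d a b"
    and eq: "take d x = take d y"
  have "x ! i = y ! i" if "i < d" for i
    using eq nth_take[OF that, of x] nth_take[OF that, of y] by simp
  then show "x = y" using x y by (intro hyperplane_eqI[of x d a b y])
qed

lemma take_hyperplane: "take d ` hyperplane d a b = (vecs d :: 'f::field list set)"
proof
  show "take d ` hyperplane d a b \<subseteq> vecs d"
    by (auto simp: hyperplane_def vecs_def)
  show "vecs d \<subseteq> take d ` hyperplane d a b"
  proof
    fix y :: "'f list" assume "y \<in> vecs d"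
    then have ly: "length y = d" by (simp add: vecs_def)
    let ?x = "y @ [(\<Sum>i<d. a ! i * y ! i) + b]"
    have "?x \<in> hyperplane d a b"
      using ly by (simp add: hyperplane_def vecs_def nth_append)
    moreover have "y = take d ?x" using ly by simp
    ultimately show "y \<in> take d ` hyperplane d a b" by blast
  qed
qed

lemma card_hyperplane: "card (hyperplane d a b :: 'f::{field,finite} list set) = card (UNIV :: 'f set) ^ d"
  using card_image[OF inj_on_take_hyperplane[of d a b]] by (simp add: take_hyperplane card_vecs)

definition delete_nth :: "nat \<Rightarrow> 'a list \<Rightarrow> 'a list" where
  "delete_nth i xs = take i xs @ drop (Suc i) xs"

lemma length_delete_nth: "i < length xs \<Longrightarrow> length (delete_nth i xs) = length xs - 1"
  by (simp add: delete_nth_def)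

lemma nth_delete_nth:
  "i < length xs \<Longrightarrow> j < length xs - 1 \<Longrightarrow>
     delete_nth i xs ! j = xs ! (if j < i then j else Suc j)"
  by (simp add: delete_nth_def nth_append)

lemma delete_nth_eqD:
  assumes "delete_nth i xs = delete_nth i ys" "length xs = length ys"
    "i < length xs" "j < length xs" "j \<noteq> i"
  shows "xs ! j = ys ! j"
proof -
  define j' where "j' = (if j < i then j else j - 1)"
  have "j' < length xs - 1" and "(if j' < i then j' else Suc j') = j"
    using assms(3-5) by (auto simp: j'_def)
  then show ?thesis
    using assms(1-3) nth_delete_nth[of i xs j'] nth_delete_nth[of i ys j'] by simp
qed

lemma card_hyperplane_Int_le:
  fixes a a' :: "'f::{field,finite} list"
  assumes la: "length a = d" and la': "length a' = d" and ne: "(a, b) \<noteq> (a', b')"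
  shows "card (hyperplane d a b \<inter> hyperplane d a' b') \<le> card (UNIV :: 'f set) ^ (d - 1)"
proof (cases "a = a'")
  case True
  then have "hyperplane d a b \<inter> hyperplane d a' b' = {}"
    using ne by (auto simp: hyperplane_def)
  then show ?thesis by simp
next
  case False
  then obtain i where i: "i < d" "a ! i \<noteq> a' ! i"
    using la la' nth_equalityI[of a a'] by auto
  let ?I = "hyperplane d a b \<inter> hyperplane d a' b'"
  let ?g = "\<lambda>x. delete_nth i (take d x)"
  \<comment> \<open>Off coordinate i two common points agree; since a_i differs from a'_i, subtracting
    the two hyperplane equations then forces agreement at i as well.\<close>
  have "inj_on ?g ?I"
  proof (rule inj_onI)
    fix x y assume x: "x \<in> ?I" and y: "y \<in> ?I" and g: "?g x = ?g y"
    have lx: "length x = Suc d" and ly: "length y = Suc d"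
      using x y length_hyperplane by auto
    have agree: "x ! j = y ! j" if "j < d" "j \<noteq> i" for j
      using delete_nth_eqD[OF g, of j] lx ly i(1) that by simp
    have reduce: "(\<Sum>j<d. c ! j * (x ! j - y ! j)) = c ! i * (x ! i - y ! i)" for c :: "'f list"
      using i(1) by (subst sum.remove[of _ i]) (auto simp: agree intro!: sum.neutral)
    have "a ! i * (x ! i - y ! i) = a' ! i * (x ! i - y ! i)"
      using hyperplane_last_diff[of x d a b y] hyperplane_last_diff[of x d a' b' y] x y
      unfolding reduce by (metis IntD1 IntD2)
    then have "(a ! i - a' ! i) * (x ! i - y ! i) = 0"
      by (simp add: left_diff_distrib)
    then have "x ! i = y ! i" using i(2) by simp
    then show "x = y"
      using x y agree by (intro hyperplane_eqI[of x d a b y]) auto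
  qed
  moreover have "?g ` ?I \<subseteq> vecs (d - 1)"
    using i(1) by (auto simp: vecs_def length_delete_nth dest: length_hyperplane)
  ultimately have "card ?I \<le> card (vecs (d - 1) :: 'f list set)"
    by (rule card_inj_on_le[OF _ _ finite_vecs])
  then show ?thesis by (simp add: card_vecs)
qed

lemma card_field_ge_2: "2 \<le> card (UNIV :: 'f::{field,finite} set)"
proof -
  have "card {0 :: 'f, 1} = 2" by simp
  then show ?thesis
    using card_mono[of "UNIV :: 'f set" "{0, 1}"] by simp
qed

lemma hyperplane_eq_iff:
  fixes a a' :: "'f::{field,finite} list"
  assumes "length a = d" "length a' = d" "0 < d"
  shows "hyperplane d a b = hyperplane d a' b' \<longleftrightarrow> a = a' \<and> b = b'"
proof
  assume eq: "hyperplane d a b = hyperplane d a' b'"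
  have "card (UNIV :: 'f set) ^ (d - 1) < card (UNIV :: 'f set) ^ d"
    using card_field_ge_2[where 'f = 'f] assms(3) by (intro power_strict_increasing) auto
  then show "a = a' \<and> b = b'"
    using card_hyperplane_Int_le[OF assms(1,2), of b b'] eq card_hyperplane[of d a b] by force
qed simp

lemma sigma_hyperplane:
  fixes a :: "'f::{field,finite} list"
  assumes "length a = d" "0 < d"
  shows "sigma d (hyperplane d a b) = a"
  unfolding sigma_def using assms hyperplane_eq_iff by (intro the_equality) blast+

lemma inj_on_shift_proj_hyperplane:
  fixes a :: "'f::{field,finite} list"
  assumes "length a = d" "0 < d"
  shows "inj_on (shift_proj d (hyperplane d a b)) (hyperplane d a b)"
proof (rule inj_onI)
  fix x y assume x: "x \<in> hyperplane d a b" and y: "y \<in> hyperplane d a b"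
    and eq: "shift_proj d (hyperplane d a b) x = shift_proj d (hyperplane d a b) y"
  have "x ! j = y ! j" if "j < d" for j
  proof -
    have "map2 (+) (take d x) a ! j = map2 (+) (take d y) a ! j"
      using eq by (simp add: shift_proj_def proj_def sigma_hyperplane[OF assms])
    then show ?thesis
      using that assms(1) length_hyperplane[OF x] length_hyperplane[OF y] by simp
  qed
  then show "x = y" using x y by (rule hyperplane_eqI[of x d a b y, rotated 2])
qed

lemma hyperplane_unique_through:
  fixes a a' :: "'f::{field,finite} list"
  assumes "length a = d" "length a' = d"
    and "S \<subseteq> hyperplane d a b" "S \<subseteq> hyperplane d a' b'"
    and "card (UNIV :: 'f set) ^ (d - 1) < card S"
  shows "a' = a \<and> b' = b"
proof (rule ccontr)
  assume "\<not> (a' = a \<and> b' = b)"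
  then have "card (hyperplane d a b \<inter> hyperplane d a' b') \<le> card (UNIV :: 'f set) ^ (d - 1)"
    using card_hyperplane_Int_le[OF assms(1,2)] by auto
  moreover have "card S \<le> card (hyperplane d a b \<inter> hyperplane d a' b')"
    using assms(3,4) by (intro card_mono) (simp_all add: finite_hyperplane)
  ultimately show False using assms(5) by simp
qed

lemma exists_bij_betw_image_eq:
  assumes "finite A" "finite B" "S \<subseteq> A" "T \<subseteq> B" "card A = card B" "card S = card T"
  shows "\<exists>f. bij_betw f A B \<and> f ` S = T"
proof -
  have "finite S" "finite T" using assms(1-4) finite_subset by auto
  then obtain g where g: "bij_betw g S T"
    using finite_same_card_bij assms(6) by blast
  have "card (A - S) = card (B - T)"
    using assms card_Diff_subset \<open>finite S\<close> \<open>finite T\<close> by metis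
  then obtain h where h: "bij_betw h (A - S) (B - T)"
    using finite_same_card_bij assms(1,2) by blast
  let ?f = "\<lambda>x. if x \<in> S then g x else h x"
  have "bij_betw ?f (S \<union> (A - S)) (T \<union> (B - T))"
    by (rule bij_betw_disjoint_Un[OF g h]) auto
  moreover have "?f ` S = T" using g by (simp add: bij_betw_def)
  ultimately show ?thesis using assms(3,4) Un_Diff_cancel Un_absorb1 by metis
qed

lemma length_max_exec: "max_exec m d \<tau> H \<rho> \<Longrightarrow> length \<rho> = Suc m"
  unfolding max_exec_def by auto

lemma max_execE:
  assumes "max_exec m d \<tau> H \<rho>"
  obtains f a b where "is_deal m \<tau> H" "bij_betw f UNIV (vecs (Suc d))" "length a = d"
    "vecs (Suc d) - f ` H 0 = hyperplane d a b"
    "\<rho> = MapTok f # map (\<lambda>k. SetTok (shift_proj d (hyperplane d a b) ` f ` H k)) [1..<Suc m]"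
proof -
  obtain f X where deal: "is_deal m \<tau> H" and f: "bij_betw f UNIV (vecs (Suc d))"
    and tr: "transversal d (vecs (Suc d) - f ` H 0)"
    and X: "\<forall>k\<in>{1..m}. X k = shift_proj d (vecs (Suc d) - f ` H 0) ` f ` H k"
    and \<rho>: "\<rho> = MapTok f # map (\<lambda>k. SetTok (X k)) [1..<Suc m]"
    using assms unfolding max_exec_def by blast
  obtain a b where a: "length a = d" and V: "vecs (Suc d) - f ` H 0 = hyperplane d a b"
    using tr unfolding transversal_def by blast
  have "map (\<lambda>k. SetTok (X k)) [1..<Suc m]
      = map (\<lambda>k. SetTok (shift_proj d (hyperplane d a b) ` f ` H k)) [1..<Suc m]"
    using X V by (intro map_cong) auto
  then show ?thesis using that[OF deal f a V] \<rho> by simp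
qed

lemma execution_extends_to_max_exec:
  assumes "execution m d \<tau> H \<rho>" "\<rho> \<noteq> []"
  obtains \<rho>' where "max_exec m d \<tau> H (\<rho> @ \<rho>')"
proof -
  let ?k = "length \<rho> - 1"
  have "?k < length \<rho>" using assms(2) by simp
  then obtain \<rho>' where "max_exec m d \<tau> H (take ?k \<rho> @ [\<rho> ! ?k] @ \<rho>')"
    using assms(1) by (auto simp: execution_def Pi_def)
  moreover have "take ?k \<rho> @ [\<rho> ! ?k] = \<rho>"
    using take_Suc_conv_app_nth[OF \<open>?k < length \<rho>\<close>] assms(2) by simp
  ultimately show ?thesis using that by (metis append_assoc)
qed

lemma max_exec_if_execution_length:
  assumes "execution m d \<tau> H \<rho>" "length \<rho> = Suc m"
  shows "max_exec m d \<tau> H \<rho>"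
proof -
  have "\<rho> \<noteq> []" using assms(2) by auto
  with assms(1) obtain \<rho>' where "max_exec m d \<tau> H (\<rho> @ \<rho>')"
    by (rule execution_extends_to_max_exec)
  moreover from length_max_exec[OF this] assms(2) have "\<rho>' = []" by simp
  ultimately show ?thesis by simp
qed

lemma max_exec_if_terminal:
  assumes "terminal m d \<tau> H \<rho>" "\<rho> \<noteq> []"
  shows "max_exec m d \<tau> H \<rho>"
proof -
  have "execution m d \<tau> H \<rho>" using assms(1) by (simp add: terminal_def)
  then obtain \<rho>' where r: "max_exec m d \<tau> H (\<rho> @ \<rho>')"
    using assms(2) by (rule execution_extends_to_max_exec)
  show ?thesis
  proof (cases \<rho>')
    case Nil
    then show ?thesis using r by simp
  next
    case (Cons a \<rho>'')
    then have "a \<in> Pi m d \<tau> H \<rho>" using r by (auto simp: Pi_def)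
    then show ?thesis using assms(1) by (simp add: terminal_def)
  qed
qed

lemma image_hand_subset_complement:
  assumes "is_deal m \<tau> H" "bij_betw f UNIV W" "1 \<le> k" "k \<le> m"
  shows "f ` H k \<subseteq> W - f ` H 0"
proof -
  have "H k \<inter> H 0 = {}" using assms(1,3,4) unfolding is_deal_def by auto
  then show ?thesis
    using assms(2) unfolding bij_betw_def by (auto simp: inj_on_def)
qed

lemma ex_max_exec:
  assumes s: "suitable m (card (UNIV :: 'f::{field,finite} set)) d \<tau>"
    and c: "card (UNIV :: 'c::finite set) = tau_total m \<tau>"
    and deal: "is_deal m \<tau> (H :: nat \<Rightarrow> 'c set)"
  shows "\<exists>\<rho> :: ('c, 'f) token list. max_exec m d \<tau> H \<rho>"
proof -
  let ?W = "vecs (Suc d) :: 'f list set"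
  let ?V = "hyperplane d (replicate d 0) (0 :: 'f)"
  have VW: "?V \<subseteq> ?W" by (rule hyperplane_subset_vecs)
  have "card (H 0) = card (?W - ?V)"
    using deal s card_Diff_subset[OF finite_hyperplane VW]
    by (simp add: is_deal_def suitable_def card_vecs card_hyperplane)
  moreover have "card (UNIV :: 'c set) = card ?W"
    using c s by (simp add: suitable_def card_vecs)
  ultimately have "\<exists>f. bij_betw f UNIV ?W \<and> f ` H 0 = ?W - ?V"
    using VW by (intro exists_bij_betw_image_eq) (simp_all add: finite_vecs)
  then obtain f where f: "bij_betw f UNIV ?W" and fH0: "f ` H 0 = ?W - ?V"
    by blast
  have "?W - f ` H 0 = ?V" unfolding fH0 using VW by (rule double_diff) simp
  then have tr: "transversal d (?W - f ` H 0)"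
    unfolding transversal_def by (intro exI[of _ "replicate d 0"] exI[of _ 0]) simp
  define X where "X k = shift_proj d (?W - f ` H 0) ` f ` H k" for k
  have "max_exec m d \<tau> H (MapTok f # map (\<lambda>k. SetTok (X k)) [1..<Suc m])"
    unfolding max_exec_def using deal f tr X_def by blast
  then show ?thesis by blast
qed

lemma terminal_nonempty:
  assumes "suitable m (card (UNIV :: 'f::{field,finite} set)) d \<tau>"
    and "card (UNIV :: 'c::finite set) = tau_total m \<tau>"
    and "terminal m d \<tau> (H :: nat \<Rightarrow> 'c set) (\<rho> :: ('c, 'f) token list)"
  shows "\<rho> \<noteq> []"
proof
  assume "\<rho> = []"
  have "is_deal m \<tau> H" using assms(3) by (simp add: terminal_def execution_def)
  then obtain \<sigma> :: "('c, 'f) token list" where \<sigma>: "max_exec m d \<tau> H \<sigma>"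
    using ex_max_exec[OF assms(1,2)] by blast
  then obtain t \<sigma>' where "\<sigma> = t # \<sigma>'"
    using length_max_exec by (cases \<sigma>) fastforce+
  then have "t \<in> Pi m d \<tau> H []" using \<sigma> by (auto simp: Pi_def)
  then show False using assms(3) \<open>\<rho> = []\<close> by (simp add: terminal_def)
qed

lemma deal_eq_if_images_eq:
  assumes "is_deal m \<tau> H" "is_deal m \<tau> H'" "inj f" "\<And>k. k \<le> m \<Longrightarrow> f ` H' k = f ` H k"
  shows "H' = H"
proof
  fix k
  show "H' k = H k"
  proof (cases "k \<le> m")
    case True
    then show ?thesis using assms(3,4) by (simp add: inj_image_eq_iff)
  next
    case False
    then show ?thesis using assms(1,2) by (simp add: is_deal_def)
  qed
qed

lemma hand_determines_transversal:
  fixes a a' :: "'f::{field,finite} list"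
  assumes s: "suitable m (card (UNIV :: 'f set)) d \<tau>"
    and deal: "is_deal m \<tau> H" and deal': "is_deal m \<tau> H'"
    and f: "bij_betw f UNIV (vecs (Suc d))" and a: "length a = d" and a': "length a' = d"
    and V: "vecs (Suc d) - f ` H 0 = hyperplane d a b"
    and V': "vecs (Suc d) - f ` H' 0 = hyperplane d a' b'"
    and P: "P \<le> m" and HP: "H' P = H P"
  shows "a' = a \<and> b' = b"
proof (cases "P = 0")
  case True
  then show ?thesis
    using V V' HP hyperplane_eq_iff[OF a a'] s by (auto simp: suitable_def)
next
  case False
  have "inj f" using f by (simp add: bij_betw_def)
  have "card (f ` H P) = \<tau> P"
    using deal P card_image[OF inj_on_subset[OF \<open>inj f\<close> subset_UNIV]] by (simp add: is_deal_def)
  then have "card (UNIV :: 'f set) ^ (d - 1) < card (f ` H P)"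
    using s P False by (simp add: suitable_def)
  moreover have "f ` H P \<subseteq> hyperplane d a b" "f ` H P \<subseteq> hyperplane d a' b'"
    using image_hand_subset_complement[OF deal f, of P] image_hand_subset_complement[OF deal' f, of P]
      V V' HP P False by auto
  ultimately show ?thesis
    using hyperplane_unique_through[OF a a'] by blast
qed

lemma max_exec_determines_deal:
  fixes H H' :: "nat \<Rightarrow> 'c set" and \<rho> :: "('c, 'f::{field,finite}) token list"
  assumes s: "suitable m (card (UNIV :: 'f set)) d \<tau>"
    and M: "max_exec m d \<tau> H \<rho>" and M': "max_exec m d \<tau> H' \<rho>"
    and P: "P \<le> m" and HP: "H' P = H P"
  shows "H' = H"
proof -
  let ?W = "vecs (Suc d) :: 'f list set"
  obtain f a b where deal: "is_deal m \<tau> H" and f: "bij_betw f UNIV ?W" and a: "length a = d"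
    and V: "?W - f ` H 0 = hyperplane d a b"
    and \<rho>: "\<rho> = MapTok f # map (\<lambda>k. SetTok (shift_proj d (hyperplane d a b) ` f ` H k)) [1..<Suc m]"
    using M by (rule max_execE)
  obtain f' a' b' where deal': "is_deal m \<tau> H'" and a': "length a' = d"
    and V': "?W - f' ` H' 0 = hyperplane d a' b'"
    and \<rho>': "\<rho> = MapTok f' # map (\<lambda>k. SetTok (shift_proj d (hyperplane d a' b') ` f' ` H' k)) [1..<Suc m]"
    using M' by (rule max_execE)
  have "f' = f" using \<rho> \<rho>' by simp
  have ab: "a' = a" "b' = b"
    using hand_determines_transversal[OF s deal deal' f a a' V _ P HP] V' \<open>f' = f\<close> by simp_all
  let ?sp = "shift_proj d (hyperplane d a b)"
  have shifted: "map (\<lambda>k. SetTok (?sp ` f ` H' k)) [1..<Suc m] = map (\<lambda>k. SetTok (?sp ` f ` H k)) [1..<Suc m]"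
    using \<rho> \<rho>' \<open>f' = f\<close> ab by (simp del: upt_Suc)
  have "f ` H' k = f ` H k" if "k \<le> m" for k
  proof (cases "k = 0")
    case True
    have "?W - f ` H' 0 = ?W - f ` H 0" using V V' \<open>f' = f\<close> ab by simp
    with True f show ?thesis unfolding bij_betw_def by blast
  next
    case False
    have "k \<in> set [1..<Suc m]" using that False by (simp del: upt_Suc)
    then have "?sp ` f ` H' k = ?sp ` f ` H k"
      using shifted unfolding map_eq_conv by (auto simp del: upt_Suc)
    moreover have "f ` H' k \<subseteq> hyperplane d a b" "f ` H k \<subseteq> hyperplane d a b"
      using image_hand_subset_complement[OF deal f, of k] image_hand_subset_complement[OF deal' f, of k]
        that False V V' \<open>f' = f\<close> ab by auto
    moreover have "0 < d" using s by (simp add: suitable_def)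
    ultimately show ?thesis using inj_on_image_eq_iff inj_on_shift_proj_hyperplane[OF a] by metis
  qed
  moreover have "inj f" using f by (simp add: bij_betw_def)
  ultimately show "H' = H" by (intro deal_eq_if_images_eq[OF deal deal'])
qed

theorem mainTheorem9:
  fixes m d :: nat and \<tau> :: "nat \<Rightarrow> nat"
    and H :: "nat \<Rightarrow> 'c::finite set"
    and \<rho> :: "('c, 'f::{field,finite}) token list"
  assumes "suitable m (card (UNIV :: 'f set)) d \<tau>"
    and "card (UNIV :: 'c set) = tau_total m \<tau>"
    and "terminal m d \<tau> H \<rho>"
    and "P \<le> m"
  shows "\<not> (\<exists>H'. execution m d \<tau> H' \<rho> \<and> H' \<noteq> H \<and> H' P = H P)"
proof
  assume "\<exists>H'. execution m d \<tau> H' \<rho> \<and> H' \<noteq> H \<and> H' P = H P"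
  then obtain H' where exec': "execution m d \<tau> H' \<rho>" and "H' \<noteq> H" and "H' P = H P"
    by blast
  have M: "max_exec m d \<tau> H \<rho>"
    using max_exec_if_terminal[OF assms(3) terminal_nonempty[OF assms(1-3)]] .
  have M': "max_exec m d \<tau> H' \<rho>"
    using max_exec_if_execution_length[OF exec' length_max_exec[OF M]] .
  have "H' = H" by (rule max_exec_determines_deal[OF assms(1) M M' assms(4) \<open>H' P = H P\<close>])
  with \<open>H' \<noteq> H\<close> show False ..
qed

end
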